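(* Let $\mathfrak g_0=\mathfrak{sl}(2n,\mathbb R)$, $n\ge2$. A $\Delta^+(\mathfrak k,\mathfrak t_f)$-dominant weight $\mu=(a_1,\dots,a_n)$ (so $a_1\ge\cdots\ge a_{n-1}\ge|a_n|$, with all $a_i\in\mathbb Z$ or all $a_i\in\mathbb Z+\tfrac12$) lies in $R(\Delta(\mathfrak p,\mathfrak t_f))$ if and only if $$a_1+\cdots+a_k\le 2nk-k^2+k\ \ (1\le k\le n)\quad\text{and}\quad a_1+\cdots+a_{n-1}-a_n\le n^2+n.$$ In particular every such $\mu$ with $a_1\le n+1$ is u-small.
   Context: Here $\mathfrak k=\mathfrak{so}(2n,\mathbb C)$ and $i\mathfrak t_{f,0}^*$ has coordinates with respect to an orthogonal basis $e_1,\dots,e_n$ (of equal lengths); $\Delta^+(\mathfrak k,\mathfrak t_f)=\{e_i\pm e_j:1\le i<j\le n\}$ and $\Delta(\mathfrak p,\mathfrak t_f)=\{\pm(e_i\pm e_j):i<j\}\cup\{\pm2e_i\}$. $R(\Delta(\mathfrak p,\mathfrak t_f))=\{\sum_{\alpha\in\Delta(\mathfrak p,\mathfrak t_f)}b_\alpha\alpha:0\le b_\alpha\le1\}$, and $\mu$ is called u-small if it lies in this set. *)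

theory Defs
  imports Complex_Main
begin

text \<open>Weights in i t_{f,0}^* are represented by their coordinates with respect to
the orthogonal basis e_1,...,e_n, i.e. as functions nat => real, where only the
indices 1..n are relevant (all roots vanish outside 1..n).\<close>

definition unitvec :: "nat \<Rightarrow> nat \<Rightarrow> real" where
  "unitvec i = (\<lambda>j. if j = i then 1 else 0)"

definition delta_p :: "nat \<Rightarrow> (nat \<Rightarrow> real) set" where
  "delta_p n =
     {(\<lambda>m. s * (unitvec i m + t * unitvec j m)) | s t i j.
        s \<in> {1, -1} \<and> t \<in> {1, -1} \<and> 1 \<le> i \<and> i < j \<and> j \<le> n}
   \<union> {(\<lambda>m. s * (2 * unitvec i m)) | s i. s \<in> {1, -1} \<and> 1 \<le> i \<and> i \<le> n}"

definition in_R_delta_p :: "nat \<Rightarrow> (nat \<Rightarrow> real) \<Rightarrow> bool" where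
  "in_R_delta_p n mu \<longleftrightarrow>
     (\<exists>b :: (nat \<Rightarrow> real) \<Rightarrow> real.
        (\<forall>\<alpha>\<in>delta_p n. 0 \<le> b \<alpha> \<and> b \<alpha> \<le> 1) \<and>
        (\<forall>m\<in>{1..n}. mu m = (\<Sum>\<alpha>\<in>delta_p n. b \<alpha> * \<alpha> m)))"

definition u_small :: "nat \<Rightarrow> (nat \<Rightarrow> real) \<Rightarrow> bool" where
  "u_small n mu \<longleftrightarrow> in_R_delta_p n mu"

definition k_dominant :: "nat \<Rightarrow> (nat \<Rightarrow> real) \<Rightarrow> bool" where
  "k_dominant n a \<longleftrightarrow>
     (\<forall>i. 1 \<le> i \<and> i < n - 1 \<longrightarrow> a (i + 1) \<le> a i) \<and> \<bar>a n\<bar> \<le> a (n - 1)"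

definition int_or_half_int :: "nat \<Rightarrow> (nat \<Rightarrow> real) \<Rightarrow> bool" where
  "int_or_half_int n a \<longleftrightarrow>
     (\<forall>i\<in>{1..n}. a i \<in> \<int>) \<or> (\<forall>i\<in>{1..n}. a i - 1/2 \<in> \<int>)"

end

theory Submission
  imports Defs "HOL-Analysis.Function_Topology"
begin

text \<open>R(Delta(p,t_f)) is the zonotope of the roots, so a weight mu lies in it iff
<c, mu> <= h(c) = sum_alpha max(0, <c, alpha>) for every c.  The nontrivial direction comes from
a coefficient vector in the unit cube closest to mu: its residual r satisfies
|r|^2 + h(r) = <r, mu>.  For the roots +-e_i +- e_j, +-2e_i one computes
h(c) = 2 sum_i |c_i| + sum_(i ~= j) max(|c_i|, |c_j|), which takes the value 2nk - k^2 + k on the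
indicator of a k-element set.  Peeling |c| into indicator layers reduces the dual inequality to
sum_(i in S) |a_i| <= 2nk - k^2 + k for all S of size k; for a dominant weight the worst S is
{1..k}, and at k = n the sign of a_n splits the condition into the two stated inequalities.\<close>

section \<open>Zonotopes and their support function\<close>

definition coord_dot :: "'i set \<Rightarrow> ('i \<Rightarrow> real) \<Rightarrow> ('i \<Rightarrow> real) \<Rightarrow> real" where
  "coord_dot I c v = (\<Sum>m\<in>I. c m * v m)"

definition sqnorm :: "'i set \<Rightarrow> ('i \<Rightarrow> real) \<Rightarrow> real" where
  "sqnorm I v = (\<Sum>m\<in>I. (v m)\<^sup>2)"

definition in_zonotope :: "'i set \<Rightarrow> ('i \<Rightarrow> real) set \<Rightarrow> ('i \<Rightarrow> real) \<Rightarrow> bool" where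
  "in_zonotope I D mu \<longleftrightarrow>
     (\<exists>b. (\<forall>\<alpha>\<in>D. 0 \<le> b \<alpha> \<and> b \<alpha> \<le> 1) \<and> (\<forall>m\<in>I. mu m = (\<Sum>\<alpha>\<in>D. b \<alpha> * \<alpha> m)))"

definition zonotope_support :: "'i set \<Rightarrow> ('i \<Rightarrow> real) set \<Rightarrow> ('i \<Rightarrow> real) \<Rightarrow> real" where
  "zonotope_support I D c = (\<Sum>\<alpha>\<in>D. max 0 (coord_dot I c \<alpha>))"

definition zonotope_residual ::
    "('i \<Rightarrow> real) set \<Rightarrow> ('i \<Rightarrow> real) \<Rightarrow> (('i \<Rightarrow> real) \<Rightarrow> real) \<Rightarrow> 'i \<Rightarrow> real" where
  "zonotope_residual D mu b m = mu m - (\<Sum>\<alpha>\<in>D. b \<alpha> * \<alpha> m)"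

lemma coord_dot_cong: "(\<And>m. m \<in> I \<Longrightarrow> v m = w m) \<Longrightarrow> coord_dot I c v = coord_dot I c w"
  unfolding coord_dot_def by (rule sum.cong) auto

lemma coord_dot_combination:
  "coord_dot I c (\<lambda>m. \<Sum>\<alpha>\<in>D. b \<alpha> * \<alpha> m) = (\<Sum>\<alpha>\<in>D. b \<alpha> * coord_dot I c \<alpha>)"
proof -
  have "coord_dot I c (\<lambda>m. \<Sum>\<alpha>\<in>D. b \<alpha> * \<alpha> m) = (\<Sum>m\<in>I. \<Sum>\<alpha>\<in>D. b \<alpha> * (c m * \<alpha> m))"
    unfolding coord_dot_def by (simp add: sum_distrib_left mult_ac)
  also have "\<dots> = (\<Sum>\<alpha>\<in>D. b \<alpha> * coord_dot I c \<alpha>)"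
    unfolding coord_dot_def by (subst sum.swap) (simp add: sum_distrib_left)
  finally show ?thesis .
qed

lemma mult_le_max_zero: "0 \<le> b \<Longrightarrow> b \<le> 1 \<Longrightarrow> b * q \<le> max 0 (q::real)"
  by (cases "q \<ge> 0") (auto simp: mult_left_le_one_le mult_nonneg_nonpos)

lemma in_zonotope_le_support:
  assumes "in_zonotope I D mu"
  shows "coord_dot I c mu \<le> zonotope_support I D c"
proof -
  obtain b where b: "\<forall>\<alpha>\<in>D. 0 \<le> b \<alpha> \<and> b \<alpha> \<le> 1"
    and mu: "\<forall>m\<in>I. mu m = (\<Sum>\<alpha>\<in>D. b \<alpha> * \<alpha> m)"
    using assms unfolding in_zonotope_def by blast
  have "coord_dot I c mu = coord_dot I c (\<lambda>m. \<Sum>\<alpha>\<in>D. b \<alpha> * \<alpha> m)"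
    using mu by (intro coord_dot_cong) auto
  also have "\<dots> = (\<Sum>\<alpha>\<in>D. b \<alpha> * coord_dot I c \<alpha>)"
    by (rule coord_dot_combination)
  also have "\<dots> \<le> zonotope_support I D c"
    unfolding zonotope_support_def using b by (intro sum_mono mult_le_max_zero) auto
  finally show ?thesis .
qed

lemma exists_min_on_unit_cube:
  assumes "continuous_map (product_topology (\<lambda>_. euclideanreal) D) euclideanreal f"
  shows "\<exists>b\<in>PiE D (\<lambda>_. {0..1::real}). \<forall>b'\<in>PiE D (\<lambda>_. {0..1}). f b \<le> f b'"
proof -
  let ?cube = "PiE D (\<lambda>_. {0..1::real})"
  have "compact (f ` ?cube)"
    using image_compactin[OF _ assms] by (simp add: compactin_PiE)
  moreover have "restrict (\<lambda>_. 0) D \<in> ?cube" by auto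
  ultimately obtain y where "y \<in> f ` ?cube" "\<forall>z\<in>f ` ?cube. y \<le> z"
    using compact_attains_inf[of "f ` ?cube"] by blast
  then show ?thesis by blast
qed

lemma small_step_decreases:
  fixes q Q \<epsilon> :: real
  assumes "0 < q" "0 \<le> Q" "0 < \<epsilon>"
  shows "\<exists>t. 0 < t \<and> t \<le> \<epsilon> \<and> t\<^sup>2 * Q < 2 * t * q"
proof (intro exI conjI)
  define t where "t = min \<epsilon> (q / (Q + 1))"
  show "0 < t" "t \<le> \<epsilon>" using assms by (auto simp: t_def)
  have "t * (Q + 1) \<le> q" using assms by (simp add: t_def pos_le_divide_eq[symmetric])
  then have "t * Q < q" using \<open>0 < t\<close> by (simp add: algebra_simps)
  then have "t * (t * Q) < t * q" using \<open>0 < t\<close> by simp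
  then show "t\<^sup>2 * Q < 2 * t * q" using \<open>0 < t\<close> \<open>0 < q\<close>
    by (simp add: power2_eq_square algebra_simps)
qed

lemma zonotope_residual_update:
  assumes "finite D" "\<alpha> \<in> D"
  shows "zonotope_residual D mu (b(\<alpha> := v)) m = zonotope_residual D mu b m - (v - b \<alpha>) * \<alpha> m"
proof -
  have "(\<Sum>\<beta>\<in>D. (b(\<alpha> := v)) \<beta> * \<beta> m) = (\<Sum>\<beta>\<in>D. b \<beta> * \<beta> m + (if \<beta> = \<alpha> then (v - b \<alpha>) * \<alpha> m else 0))"
    by (rule sum.cong) (auto simp: left_diff_distrib)
  with assms show ?thesis
    by (simp add: zonotope_residual_def sum.distrib)
qed

lemma sqnorm_diff_scaled:
  "sqnorm I (\<lambda>m. r m - t * a m) = sqnorm I r - 2 * t * coord_dot I r a + t\<^sup>2 * sqnorm I a"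
  unfolding sqnorm_def coord_dot_def
  by (simp add: power2_eq_square algebra_simps sum.distrib sum_subtractf sum_distrib_left)

text \<open>Complementary slackness at a closest point: \<open>b \<alpha> = 1\<close> where the residual has positive
inner product with \<open>\<alpha>\<close>, and \<open>b \<alpha> = 0\<close> where it is negative.\<close>

lemma min_residual_complementary:
  assumes D: "finite D" "\<alpha> \<in> D"
    and b: "b \<in> PiE D (\<lambda>_. {0..1})"
    and min: "\<And>b'. b' \<in> PiE D (\<lambda>_. {0..1}) \<Longrightarrow>
                 sqnorm I (zonotope_residual D mu b) \<le> sqnorm I (zonotope_residual D mu b')"
  defines "r \<equiv> zonotope_residual D mu b"
  shows "b \<alpha> * coord_dot I r \<alpha> = max 0 (coord_dot I r \<alpha>)"
proof -
  let ?q = "coord_dot I r \<alpha>" and ?Q = "sqnorm I \<alpha>"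
  have Q: "0 \<le> ?Q" unfolding sqnorm_def by (simp add: sum_nonneg)
  have b01: "0 \<le> b \<alpha>" "b \<alpha> \<le> 1" using b D by auto
  have no_descent: False if "0 \<le> b \<alpha> + s" "b \<alpha> + s \<le> 1" "s\<^sup>2 * ?Q < 2 * s * ?q" for s
  proof -
    have "b(\<alpha> := b \<alpha> + s) \<in> PiE D (\<lambda>_. {0..1})"
      using b that D by (auto simp: PiE_def Pi_def extensional_def)
    then have "sqnorm I r \<le> sqnorm I (zonotope_residual D mu (b(\<alpha> := b \<alpha> + s)))"
      unfolding r_def by (rule min)
    also have "zonotope_residual D mu (b(\<alpha> := b \<alpha> + s)) = (\<lambda>m. r m - s * \<alpha> m)"
      by (rule ext) (simp add: zonotope_residual_update[OF D] r_def)
    also have "sqnorm I \<dots> = sqnorm I r - 2 * s * ?q + s\<^sup>2 * ?Q"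
      by (rule sqnorm_diff_scaled)
    finally show False using that(3) by linarith
  qed
  consider "?q > 0" | "?q < 0" | "?q = 0" by linarith
  then show ?thesis
  proof cases
    case 1
    have "b \<alpha> = 1"
    proof (rule ccontr)
      assume "b \<alpha> \<noteq> 1"
      then have "0 < 1 - b \<alpha>" using b01 by simp
      then obtain t where t: "0 < t" "t \<le> 1 - b \<alpha>" "t\<^sup>2 * ?Q < 2 * t * ?q"
        using small_step_decreases[OF 1 Q] by blast
      show False by (rule no_descent[of t]) (use t b01 in linarith)+
    qed
    then show ?thesis using 1 by simp
  next
    case 2
    have "b \<alpha> = 0"
    proof (rule ccontr)
      assume "b \<alpha> \<noteq> 0"
      then have "0 < b \<alpha>" using b01 by simp
      moreover have "0 < - ?q" using 2 by simp
      ultimately obtain t where t: "0 < t" "t \<le> b \<alpha>" "t\<^sup>2 * ?Q < 2 * t * - ?q"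
        using small_step_decreases[OF _ Q] by blast
      show False by (rule no_descent[of "- t"]) (use t b01 in simp_all)
    qed
    then show ?thesis using 2 by simp
  qed simp
qed

lemma support_bound_imp_in_zonotope:
  assumes I: "finite I" and D: "finite D"
    and dual: "\<And>c. coord_dot I c mu \<le> zonotope_support I D c"
  shows "in_zonotope I D mu"
proof -
  have "continuous_map (product_topology (\<lambda>_. euclideanreal) D) euclideanreal
          (\<lambda>b. sqnorm I (zonotope_residual D mu b))"
    unfolding sqnorm_def zonotope_residual_def
    by (intro continuous_intros I D) (auto intro: continuous_map_product_projection)
  from exists_min_on_unit_cube[OF this] obtain b where b: "b \<in> PiE D (\<lambda>_. {0..1})"
    and min: "\<forall>b'\<in>PiE D (\<lambda>_. {0..1}).
                sqnorm I (zonotope_residual D mu b) \<le> sqnorm I (zonotope_residual D mu b')"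
    by (elim bexE)
  define r where "r = zonotope_residual D mu b"
  have "coord_dot I r mu = coord_dot I r (\<lambda>m. r m + (\<Sum>\<alpha>\<in>D. b \<alpha> * \<alpha> m))"
    by (simp add: r_def zonotope_residual_def)
  also have "\<dots> = sqnorm I r + coord_dot I r (\<lambda>m. \<Sum>\<alpha>\<in>D. b \<alpha> * \<alpha> m)"
    by (simp add: coord_dot_def sqnorm_def distrib_left sum.distrib power2_eq_square)
  also have "coord_dot I r (\<lambda>m. \<Sum>\<alpha>\<in>D. b \<alpha> * \<alpha> m) = (\<Sum>\<alpha>\<in>D. b \<alpha> * coord_dot I r \<alpha>)"
    by (rule coord_dot_combination)
  also have "(\<Sum>\<alpha>\<in>D. b \<alpha> * coord_dot I r \<alpha>) = zonotope_support I D r"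
    unfolding zonotope_support_def r_def
    using min_residual_complementary[OF D _ b] min by (intro sum.cong) auto
  finally have "sqnorm I r \<le> 0" using dual[of r] by simp
  then have "\<forall>m\<in>I. r m = 0"
    using I sum_nonneg_eq_0_iff[of I "\<lambda>m. (r m)\<^sup>2"] by (simp add: sqnorm_def order_antisym sum_nonneg)
  then show ?thesis
    using b unfolding in_zonotope_def r_def zonotope_residual_def by (intro exI[of _ b]) auto
qed

theorem in_zonotope_iff_support_bound:
  assumes "finite I" "finite D"
  shows "in_zonotope I D mu \<longleftrightarrow> (\<forall>c. coord_dot I c mu \<le> zonotope_support I D c)"
  using in_zonotope_le_support support_bound_imp_in_zonotope[OF assms] by blast

section \<open>The support function of Delta(p, t_f)\<close>

definition short_root :: "real \<times> real \<times> nat \<times> nat \<Rightarrow> nat \<Rightarrow> real" where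
  "short_root = (\<lambda>(s, t, i, j) m. s * (unitvec i m + t * unitvec j m))"

definition long_root :: "real \<times> nat \<Rightarrow> nat \<Rightarrow> real" where
  "long_root = (\<lambda>(s, i) m. s * (2 * unitvec i m))"

definition index_pairs :: "nat \<Rightarrow> (nat \<times> nat) set" where
  "index_pairs n = {(i, j). 1 \<le> i \<and> i < j \<and> j \<le> n}"

lemma finite_index_pairs [simp]: "finite (index_pairs n)"
  unfolding index_pairs_def by (rule finite_subset[of _ "{1..n} \<times> {1..n}"]) auto

lemma delta_p_eq:
  "delta_p n = short_root ` ({1, -1} \<times> {1, -1} \<times> index_pairs n) \<union> long_root ` ({1, -1} \<times> {1..n})"
proof -
  have "{(\<lambda>m. s * (unitvec i m + t * unitvec j m)) | s t i j.
          s \<in> {1, -1} \<and> t \<in> {1, -1} \<and> 1 \<le> i \<and> i < j \<and> j \<le> n}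
        = short_root ` ({1, -1} \<times> {1, -1} \<times> index_pairs n)"
  proof (rule equalityI)
    show "short_root ` ({1, -1} \<times> {1, -1} \<times> index_pairs n) \<subseteq> {(\<lambda>m. s * (unitvec i m + t * unitvec j m)) | s t i j.
          s \<in> {1, -1} \<and> t \<in> {1, -1} \<and> 1 \<le> i \<and> i < j \<and> j \<le> n}"
      by (auto simp: short_root_def index_pairs_def)
    show "{(\<lambda>m. s * (unitvec i m + t * unitvec j m)) | s t i j.
          s \<in> {1, -1} \<and> t \<in> {1, -1} \<and> 1 \<le> i \<and> i < j \<and> j \<le> n}
        \<subseteq> short_root ` ({1, -1} \<times> {1, -1} \<times> index_pairs n)"
      apply clarify
      subgoal for _ s t i j
        by (rule image_eqI[where x = "(s, t, i, j)"]) (auto simp: short_root_def index_pairs_def)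
      done
  qed
  moreover have "{(\<lambda>m. s * (2 * unitvec i m)) | s i. s \<in> {1, -1} \<and> 1 \<le> i \<and> i \<le> n}
        = long_root ` ({1, -1} \<times> {1..n})"
    unfolding long_root_def image_def by fastforce
  ultimately show ?thesis unfolding delta_p_def by simp
qed

lemma short_root_apply:
  "i < j \<Longrightarrow> short_root (s, t, i, j) m = (if m = i then s else if m = j then s * t else 0)"
  by (auto simp: short_root_def unitvec_def)

lemma long_root_apply: "long_root (s, i) m = (if m = i then 2 * s else 0)"
  by (simp add: long_root_def unitvec_def)

lemma inj_on_short_root: "inj_on short_root ({1, -1} \<times> {1, -1} \<times> index_pairs n)"
proof (rule inj_onI)
  fix x y
  assume x: "x \<in> {1, -1} \<times> {1, -1} \<times> index_pairs n"
    and y: "y \<in> {1, -1} \<times> {1, -1} \<times> index_pairs n"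
    and eq: "short_root x = short_root y"
  obtain s t i j s' t' i' j' where xy: "x = (s, t, i, j)" "y = (s', t', i', j')"
    by (cases x, cases y) blast
  have ne: "s \<noteq> 0" "t \<noteq> 0" "s' \<noteq> 0" "t' \<noteq> 0" and ij: "i < j" "i' < j'"
    using x y by (auto simp: xy index_pairs_def)
  have val: "short_root (s, t, i, j) m = short_root (s', t', i', j') m" for m
    using eq by (simp add: xy)
  have "i = i'"
    using val[of i] val[of i'] ne ij by (auto simp: short_root_apply split: if_splits)
  moreover have "j = j'"
    using val[of j] val[of j'] ne ij \<open>i = i'\<close> by (auto simp: short_root_apply split: if_splits)
  ultimately show "x = y"
    using val[of i] val[of j] ne ij by (auto simp: xy short_root_apply)
qed

lemma inj_on_long_root: "inj_on long_root ({1, -1} \<times> {1..n})"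
proof (rule inj_onI)
  fix x y
  assume x: "x \<in> {1, -1} \<times> {1..n}" and eq: "long_root x = long_root y"
  obtain s i s' i' where xy: "x = (s, i)" "y = (s', i')"
    by (cases x, cases y) blast
  have "long_root (s, i) i = long_root (s', i') i"
    using eq by (simp add: xy)
  then show "x = y"
    using x by (auto simp: xy long_root_apply split: if_splits)
qed

lemma short_root_neq_long_root:
  assumes "i < j" "s \<noteq> 0" "t \<noteq> 0"
  shows "short_root (s, t, i, j) \<noteq> long_root (s', k)"
proof
  assume eq: "short_root (s, t, i, j) = long_root (s', k)"
  show False
    using fun_cong[OF eq, of i] fun_cong[OF eq, of j] assms
    by (auto simp: short_root_apply long_root_apply split: if_splits)
qed

lemma finite_delta_p: "finite (delta_p n)"
  by (simp add: delta_p_eq)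

lemma coord_dot_unitvec: "finite I \<Longrightarrow> i \<in> I \<Longrightarrow> coord_dot I c (unitvec i) = c i"
  unfolding coord_dot_def unitvec_def by (simp add: if_distrib sum.delta' cong: if_cong)

lemma coord_dot_linear:
  "coord_dot I c (\<lambda>m. x * v m + y * w m) = x * coord_dot I c v + y * coord_dot I c w"
  unfolding coord_dot_def by (simp add: sum.distrib sum_distrib_left algebra_simps)

lemma coord_dot_short_root:
  assumes "(i, j) \<in> index_pairs n"
  shows "coord_dot {1..n} c (short_root (s, t, i, j)) = s * (c i + t * c j)"
proof -
  have "short_root (s, t, i, j) = (\<lambda>m. s * unitvec i m + (s * t) * unitvec j m)"
    by (auto simp: short_root_def algebra_simps)
  then have "coord_dot {1..n} c (short_root (s, t, i, j))
      = s * coord_dot {1..n} c (unitvec i) + (s * t) * coord_dot {1..n} c (unitvec j)"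
    by (simp only: coord_dot_linear)
  also have "\<dots> = s * (c i + t * c j)"
    using assms by (simp add: coord_dot_unitvec index_pairs_def algebra_simps)
  finally show ?thesis .
qed

lemma coord_dot_long_root:
  assumes "i \<in> {1..n}"
  shows "coord_dot {1..n} c (long_root (s, i)) = s * (2 * c i)"
proof -
  have "long_root (s, i) = (\<lambda>m. (2 * s) * unitvec i m + 0 * unitvec i m)"
    by (simp add: long_root_def fun_eq_iff)
  then have "coord_dot {1..n} c (long_root (s, i)) = (2 * s) * coord_dot {1..n} c (unitvec i)"
    by (simp only: coord_dot_linear)
  then show ?thesis
    using assms by (simp add: coord_dot_unitvec)
qed

definition off_diagonal :: "'a set \<Rightarrow> ('a \<times> 'a) set" where
  "off_diagonal T = {(i, j). i \<in> T \<and> j \<in> T \<and> i \<noteq> j}"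

definition max_pair_sum :: "'a set \<Rightarrow> ('a \<Rightarrow> real) \<Rightarrow> real" where
  "max_pair_sum T g = 2 * (\<Sum>i\<in>T. g i) + (\<Sum>(i, j)\<in>off_diagonal T. max (g i) (g j))"

lemma finite_off_diagonal: "finite T \<Longrightarrow> finite (off_diagonal T)"
  unfolding off_diagonal_def by (rule finite_subset[of _ "T \<times> T"]) auto

lemma sum_off_diagonal_symmetric:
  fixes f :: "nat \<Rightarrow> nat \<Rightarrow> real"
  assumes sym: "\<And>i j. f i j = f j i"
  shows "(\<Sum>(i, j)\<in>off_diagonal {1..n}. f i j) = 2 * (\<Sum>(i, j)\<in>index_pairs n. f i j)"
proof -
  let ?swap = "\<lambda>(i, j). (j, i)"
  have split: "off_diagonal {1..n} = index_pairs n \<union> ?swap ` index_pairs n"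
    unfolding off_diagonal_def index_pairs_def by (auto simp: image_def)
  have disj: "index_pairs n \<inter> ?swap ` index_pairs n = {}"
    unfolding index_pairs_def by auto
  have "inj_on ?swap (index_pairs n)"
    by (auto simp: inj_on_def)
  from sum.reindex[OF this, of "\<lambda>(i, j). f i j"]
  have "(\<Sum>(i, j)\<in>?swap ` index_pairs n. f i j) = (\<Sum>(i, j)\<in>index_pairs n. f j i)"
    by (simp add: case_prod_beta comp_def)
  also have "\<dots> = (\<Sum>(i, j)\<in>index_pairs n. f i j)"
    using sym by simp
  finally show ?thesis
    unfolding split using disj by (simp add: sum.union_disjoint)
qed

lemma sum_max_zero_signs:
  "max 0 (x + y) + max 0 (x - y) + max 0 (- x - y) + max 0 (y - x) = 2 * max \<bar>x\<bar> \<bar>y\<bar>"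
  for x y :: real
  by (auto simp: max_def abs_if)

lemma support_short_roots:
  "(\<Sum>x\<in>{1, -1} \<times> {1, -1} \<times> index_pairs n. max 0 (coord_dot {1..n} c (short_root x)))
     = (\<Sum>(i, j)\<in>index_pairs n. 2 * max \<bar>c i\<bar> \<bar>c j\<bar>)"
proof -
  let ?h = "\<lambda>x. max 0 (coord_dot {1..n} c (short_root x))"
  have "(\<Sum>x\<in>{1, -1} \<times> {1, -1} \<times> index_pairs n. ?h x)
      = (\<Sum>s\<in>{1, -1}. \<Sum>t\<in>{1, -1}. \<Sum>p\<in>index_pairs n. ?h (s, t, p))"
    by (simp add: sum.cartesian_product)
  also have "\<dots> = (\<Sum>p\<in>index_pairs n. ?h (1, 1, p) + ?h (1, -1, p) + ?h (-1, 1, p) + ?h (-1, -1, p))"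
    by (simp add: sum.distrib)
  also have "\<dots> = (\<Sum>(i, j)\<in>index_pairs n. 2 * max \<bar>c i\<bar> \<bar>c j\<bar>)"
  proof (rule sum.cong[OF refl], clarify)
    fix i j assume "(i, j) \<in> index_pairs n"
    from coord_dot_short_root[OF this] show
      "?h (1, 1, i, j) + ?h (1, -1, i, j) + ?h (-1, 1, i, j) + ?h (-1, -1, i, j)
         = 2 * max \<bar>c i\<bar> \<bar>c j\<bar>"
      using sum_max_zero_signs[of "c i" "c j"] by simp
  qed
  finally show ?thesis .
qed

lemma support_long_roots:
  "(\<Sum>x\<in>{1, -1} \<times> {1..n}. max 0 (coord_dot {1..n} c (long_root x))) = (\<Sum>i=1..n. 2 * \<bar>c i\<bar>)"
proof -
  let ?h = "\<lambda>x. max 0 (coord_dot {1..n} c (long_root x))"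
  have "(\<Sum>x\<in>{1, -1} \<times> {1..n}. ?h x) = (\<Sum>s\<in>{1, -1}. \<Sum>i=1..n. ?h (s, i))"
    by (simp add: sum.cartesian_product)
  also have "\<dots> = (\<Sum>i=1..n. ?h (1, i) + ?h (-1, i))"
    by (simp add: sum.distrib)
  also have "\<dots> = (\<Sum>i=1..n. 2 * \<bar>c i\<bar>)"
  proof (rule sum.cong[OF refl])
    fix i :: nat assume "i \<in> {1..n}"
    from coord_dot_long_root[OF this] show "?h (1, i) + ?h (-1, i) = 2 * \<bar>c i\<bar>"
      by (simp add: max_def abs_if)
  qed
  finally show ?thesis .
qed

lemma zonotope_support_delta_p:
  "zonotope_support {1..n} (delta_p n) c = max_pair_sum {1..n} (\<lambda>i. \<bar>c i\<bar>)"
proof -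
  let ?A = "{1, -1} \<times> {1, -1} \<times> index_pairs n" and ?B = "{1, -1::real} \<times> {1..n}"
  have disj: "short_root ` ?A \<inter> long_root ` ?B = {}"
    using short_root_neq_long_root by (fastforce simp: index_pairs_def)
  have "zonotope_support {1..n} (delta_p n) c
      = (\<Sum>\<alpha>\<in>short_root ` ?A. max 0 (coord_dot {1..n} c \<alpha>))
        + (\<Sum>\<alpha>\<in>long_root ` ?B. max 0 (coord_dot {1..n} c \<alpha>))"
    unfolding zonotope_support_def delta_p_eq using disj by (simp add: sum.union_disjoint)
  also have "\<dots> = (\<Sum>(i, j)\<in>index_pairs n. 2 * max \<bar>c i\<bar> \<bar>c j\<bar>) + (\<Sum>i=1..n. 2 * \<bar>c i\<bar>)"
    by (simp only: sum.reindex[OF inj_on_short_root] sum.reindex[OF inj_on_long_root] comp_def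
        support_short_roots support_long_roots)
  also have "\<dots> = max_pair_sum {1..n} (\<lambda>i. \<bar>c i\<bar>)"
    unfolding max_pair_sum_def
    by (subst sum_off_diagonal_symmetric) (auto simp: sum_distrib_left case_prod_unfold max.commute)
  finally show ?thesis .
qed

section \<open>Layer decomposition\<close>

text \<open>The value of the support function of Delta(p, t_f) at e_1 + ... + e_k.\<close>

definition prefix_bound :: "nat \<Rightarrow> nat \<Rightarrow> real" where
  "prefix_bound n k = 2 * real n * real k - (real k)\<^sup>2 + real k"

lemma card_off_diagonal:
  assumes "finite T"
  shows "real (card (off_diagonal T)) = (real (card T))\<^sup>2 - real (card T)"
proof -
  have "off_diagonal T = T \<times> T - (\<lambda>x. (x, x)) ` T"
    unfolding off_diagonal_def by auto
  moreover have "card ((\<lambda>x. (x, x)) ` T) = card T"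
    by (rule card_image) (auto simp: inj_on_def)
  ultimately have "card (off_diagonal T) = card T * card T - card T"
    using assms by (simp add: card_Diff_subset card_cartesian_product image_subset_iff)
  moreover have "card T \<le> card T * card T"
    by (cases "card T") auto
  ultimately show ?thesis
    by (simp add: of_nat_diff power2_eq_square)
qed

lemma max_pair_sum_cong:
  "(\<And>i. i \<in> T \<Longrightarrow> g i = h i) \<Longrightarrow> max_pair_sum T g = max_pair_sum T h"
  unfolding max_pair_sum_def off_diagonal_def by (auto intro!: sum.cong)

lemma max_pair_sum_add_layer:
  assumes T: "finite T" and S: "S \<subseteq> T" and m: "0 \<le> m"
    and g_nonneg: "\<And>i. i \<in> T \<Longrightarrow> 0 \<le> g i"
    and g_supp: "\<And>i. i \<in> T - S \<Longrightarrow> g i = 0"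
  shows "max_pair_sum T (\<lambda>i. m * of_bool (i \<in> S) + g i)
           = m * prefix_bound (card T) (card S) + max_pair_sum T g"
proof -
  let ?O = "off_diagonal T" and ?meets = "\<lambda>p. fst p \<in> S \<or> snd p \<in> S"
  have singles: "(\<Sum>i\<in>T. m * of_bool (i \<in> S) + g i) = m * real (card S) + (\<Sum>i\<in>T. g i)"
    using T S by (simp add: sum.distrib sum_distrib_left[symmetric] Int_absorb1)
  have "max (m * of_bool (i \<in> S) + g i) (m * of_bool (j \<in> S) + g j)
      = (if ?meets (i, j) then m else 0) + max (g i) (g j)" if "(i, j) \<in> ?O" for i j
  proof -
    have "i \<in> T" "j \<in> T" using that by (auto simp: off_diagonal_def)
    then show ?thesis
      using m g_nonneg[of i] g_nonneg[of j] g_supp[of i] g_supp[of j] by (auto simp: max_def)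
  qed
  then have "(\<Sum>(i, j)\<in>?O. max (m * of_bool (i \<in> S) + g i) (m * of_bool (j \<in> S) + g j))
      = (\<Sum>p\<in>?O. if ?meets p then m else 0) + (\<Sum>(i, j)\<in>?O. max (g i) (g j))"
    by (simp add: sum.distrib[symmetric] case_prod_unfold cong: sum.cong)
  also have "(\<Sum>p\<in>?O. if ?meets p then m else 0) = m * real (card {p \<in> ?O. ?meets p})"
    using finite_off_diagonal[OF T] by (simp add: sum.inter_filter[symmetric])
  also have "{p \<in> ?O. ?meets p} = ?O - off_diagonal (T - S)"
    unfolding off_diagonal_def by auto
  also have "real (card \<dots>) = real (card ?O) - real (card (off_diagonal (T - S)))"
  proof -
    have sub: "off_diagonal (T - S) \<subseteq> ?O"
      unfolding off_diagonal_def by auto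
    then show ?thesis
      using T card_mono[OF finite_off_diagonal[OF T] sub]
      by (simp add: card_Diff_subset finite_off_diagonal of_nat_diff)
  qed
  also have "\<dots> = (real (card T))\<^sup>2 - real (card T)
                 - ((real (card T) - real (card S))\<^sup>2 - (real (card T) - real (card S)))"
    using T S by (simp add: card_off_diagonal card_Diff_subset finite_subset card_mono of_nat_diff)
  finally show ?thesis
    unfolding max_pair_sum_def singles prefix_bound_def
    by (simp add: algebra_simps power2_eq_square)
qed

lemma max_pair_sum_indicator:
  "finite T \<Longrightarrow> S \<subseteq> T \<Longrightarrow> max_pair_sum T (\<lambda>i. of_bool (i \<in> S)) = prefix_bound (card T) (card S)"
  using max_pair_sum_add_layer[of T S 1 "\<lambda>_. 0"] by (simp add: max_pair_sum_def)

lemma weighted_sum_le_max_pair_sum: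
  assumes T: "finite T"
    and subset_bound: "\<And>S. S \<subseteq> T \<Longrightarrow> (\<Sum>i\<in>S. d i) \<le> prefix_bound (card T) (card S)"
    and "\<And>i. i \<in> T \<Longrightarrow> 0 \<le> g i"
  shows "(\<Sum>i\<in>T. g i * d i) \<le> max_pair_sum T g"
  using assms(3)
proof (induction "card {i \<in> T. g i \<noteq> 0}" arbitrary: g rule: less_induct)
  case less
  define S where "S = {i \<in> T. g i \<noteq> 0}"
  have S: "S \<subseteq> T" "finite S" using T by (auto simp: S_def)
  show ?case
  proof (cases "S = {}")
    case True
    then have "max_pair_sum T g = max_pair_sum T (\<lambda>_. 0)"
      by (intro max_pair_sum_cong) (auto simp: S_def)
    with True show ?thesis
      by (simp add: S_def max_pair_sum_def)
  next
    case False
    define m where "m = Min (g ` S)"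
    have "m \<in> g ` S"
      unfolding m_def using S False by (intro Min_in) auto
    then obtain i0 where i0: "i0 \<in> S" "g i0 = m"
      by auto
    have m_le: "m \<le> g i" if "i \<in> S" for i
      using S that by (simp add: m_def)
    have m: "0 \<le> m" using i0 less.prems S by auto
    define h where "h i = g i - m * of_bool (i \<in> S)" for i
    have g_eq: "g = (\<lambda>i. m * of_bool (i \<in> S) + h i)"
      by (simp add: h_def)
    have h_nonneg: "0 \<le> h i" if "i \<in> T" for i
      using that less.prems m_le by (auto simp: h_def)
    have h_supp: "h i = 0" if "i \<in> T - S" for i
      using that by (auto simp: h_def S_def)
    have "{i \<in> T. h i \<noteq> 0} \<subseteq> S - {i0}"
      using i0 by (auto simp: h_def S_def)
    then have "card {i \<in> T. h i \<noteq> 0} < card S"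
      using S i0 by (meson card_Diff1_less card_mono finite_Diff le_less_trans)
    then have IH: "(\<Sum>i\<in>T. h i * d i) \<le> max_pair_sum T h"
      using less.hyps h_nonneg by (simp add: S_def)
    have "(\<Sum>i\<in>T. g i * d i) = m * (\<Sum>i\<in>T. of_bool (i \<in> S) * d i) + (\<Sum>i\<in>T. h i * d i)"
      by (simp add: h_def algebra_simps sum.distrib sum_distrib_left sum_subtractf)
    also have "(\<Sum>i\<in>T. of_bool (i \<in> S) * d i) = (\<Sum>i\<in>S. d i)"
      using T S by (simp add: Int_absorb1)
    also have "m * (\<Sum>i\<in>S. d i) + (\<Sum>i\<in>T. h i * d i)
        \<le> m * prefix_bound (card T) (card S) + max_pair_sum T h"
      using subset_bound[OF S(1)] m IH by (intro add_mono mult_left_mono) auto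
    also have "\<dots> = max_pair_sum T g"
      unfolding g_eq by (rule max_pair_sum_add_layer[symmetric]) (use T S m h_nonneg h_supp in auto)
    finally show ?thesis .
  qed
qed

section \<open>Dominant weights\<close>

lemma sum_split_last: "1 \<le> (n::nat) \<Longrightarrow> (\<Sum>i=1..n. f i) = (\<Sum>i=1..n-1. f i) + f n"
  by (cases n) auto

lemma sum_le_sum_prefix:
  fixes d :: "nat \<Rightarrow> 'a :: linordered_semiring_1"
  assumes antimono: "\<And>i j. 1 \<le> i \<Longrightarrow> i \<le> j \<Longrightarrow> j \<le> n \<Longrightarrow> d j \<le> d i"
    and S: "S \<subseteq> {1..n}"
  shows "(\<Sum>i\<in>S. d i) \<le> (\<Sum>i=1..card S. d i)"
proof (cases "card S = 0")
  case True
  then show ?thesis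
    using S finite_subset by fastforce
next
  case False
  define k where "k = card S"
  define T where "T = {1..k}"
  have fin: "finite S" "finite T" using S finite_subset by (auto simp: T_def)
  have "k \<le> n" using card_mono[OF _ S] by (simp add: k_def)
  have "card (S - T) = card (T - S)"
    using fin by (metis card_Diff_subset_Int card_atLeastAtMost diff_Suc_1 finite_Int inf_commute k_def T_def)
  moreover have "(\<Sum>i\<in>S - T. d i) \<le> of_nat (card (S - T)) * d k"
    using S False antimono by (intro sum_bounded_above) (auto simp: T_def k_def)
  moreover have "of_nat (card (T - S)) * d k \<le> (\<Sum>i\<in>T - S. d i)"
    using \<open>k \<le> n\<close> antimono by (intro sum_bounded_below) (auto simp: T_def)
  ultimately have "(\<Sum>i\<in>S - T. d i) \<le> (\<Sum>i\<in>T - S. d i)"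
    by simp
  then have "(\<Sum>i\<in>S. d i) \<le> (\<Sum>i\<in>T. d i)"
    using fin by (simp add: sum.Int_Diff[of S _ T] sum.Int_Diff[of T _ S] Int_commute)
  then show ?thesis
    by (simp add: T_def k_def)
qed

lemma k_dominant_antimono:
  assumes dom: "k_dominant n a" and "1 \<le> i" "i \<le> j" "j \<le> n - 1"
  shows "a j \<le> a i"
proof -
  have "j \<le> n - 1 \<longrightarrow> a j \<le> a i"
    using \<open>i \<le> j\<close>
  proof (induction j rule: dec_induct)
    case (step j)
    show ?case
    proof
      assume "Suc j \<le> n - 1"
      then have "a (j + 1) \<le> a j"
        using dom step.hyps(1) \<open>1 \<le> i\<close> unfolding k_dominant_def by auto
      with step.IH \<open>Suc j \<le> n - 1\<close> show "a (Suc j) \<le> a i"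
        by simp
    qed
  qed simp
  with \<open>j \<le> n - 1\<close> show ?thesis by simp
qed

lemma k_dominant_nonneg:
  assumes "k_dominant n a" "1 \<le> i" "i \<le> n - 1"
  shows "0 \<le> a i"
proof -
  have "a (n - 1) \<le> a i"
    using assms by (intro k_dominant_antimono) auto
  moreover have "\<bar>a n\<bar> \<le> a (n - 1)"
    using assms(1) by (simp add: k_dominant_def)
  ultimately show ?thesis by linarith
qed

lemma k_dominant_abs_antimono:
  assumes dom: "k_dominant n a" and ij: "1 \<le> i" "i \<le> j" "j \<le> n"
  shows "\<bar>a j\<bar> \<le> \<bar>a i\<bar>"
proof (cases "j = n \<and> i < n")
  case True
  have "\<bar>a n\<bar> \<le> a (n - 1)" using dom by (simp add: k_dominant_def)
  also have "\<dots> \<le> a i" using True ij by (intro k_dominant_antimono[OF dom]) auto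
  finally show ?thesis using True by simp
next
  case False
  then have "i = j \<or> j \<le> n - 1" using ij by auto
  then show ?thesis
    using k_dominant_antimono[OF dom] k_dominant_nonneg[OF dom] ij by force
qed

section \<open>The prefix criterion\<close>

lemma zonotope_support_delta_p_prefix:
  assumes "k \<le> n" and c: "\<And>i. i \<in> {1..n} \<Longrightarrow> \<bar>c i\<bar> = of_bool (i \<le> k)"
  shows "zonotope_support {1..n} (delta_p n) c = prefix_bound n k"
proof -
  have "zonotope_support {1..n} (delta_p n) c = max_pair_sum {1..n} (\<lambda>i. of_bool (i \<in> {1..k}))"
    unfolding zonotope_support_delta_p using c by (intro max_pair_sum_cong) auto
  also have "\<dots> = prefix_bound (card {1..n}) (card {1..k})"
    using \<open>k \<le> n\<close> by (intro max_pair_sum_indicator) auto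
  finally show ?thesis by simp
qed

lemma in_R_delta_p_iff_in_zonotope: "in_R_delta_p n mu \<longleftrightarrow> in_zonotope {1..n} (delta_p n) mu"
  by (simp add: in_R_delta_p_def in_zonotope_def)

lemma in_R_delta_p_imp_prefix_bounds:
  assumes "in_R_delta_p n a"
  shows "\<And>k. k \<in> {1..n} \<Longrightarrow> (\<Sum>i=1..k. a i) \<le> prefix_bound n k"
    and "1 \<le> n \<Longrightarrow> (\<Sum>i=1..n-1. a i) - a n \<le> prefix_bound n n"
proof -
  have dual: "coord_dot {1..n} c a \<le> zonotope_support {1..n} (delta_p n) c" for c
    using assms by (simp add: in_R_delta_p_iff_in_zonotope in_zonotope_le_support)
  show "(\<Sum>i=1..k. a i) \<le> prefix_bound n k" if k: "k \<in> {1..n}" for k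
  proof -
    have "coord_dot {1..n} (\<lambda>i. of_bool (i \<le> k)) a = (\<Sum>i\<in>{1..n} \<inter> {i. i \<le> k}. a i)"
      unfolding coord_dot_def by simp
    also have "{1..n} \<inter> {i. i \<le> k} = {1..k}"
      using k by auto
    moreover have "zonotope_support {1..n} (delta_p n) (\<lambda>i. of_bool (i \<le> k)) = prefix_bound n k"
      using k by (intro zonotope_support_delta_p_prefix) auto
    ultimately show ?thesis
      using dual by metis
  qed
  show "(\<Sum>i=1..n-1. a i) - a n \<le> prefix_bound n n" if n: "1 \<le> n"
  proof -
    let ?c = "\<lambda>i. if i = n then -1 else 1 :: real"
    have "(\<Sum>i=1..n-1. ?c i * a i) = (\<Sum>i=1..n-1. a i)"
      by (intro sum.cong) auto
    then have "coord_dot {1..n} ?c a = (\<Sum>i=1..n-1. a i) - a n"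
      unfolding coord_dot_def using sum_split_last[OF n, of "\<lambda>i. ?c i * a i"] by simp
    moreover have "zonotope_support {1..n} (delta_p n) ?c = prefix_bound n n"
      by (intro zonotope_support_delta_p_prefix) auto
    ultimately show ?thesis
      using dual by metis
  qed
qed

lemma prefix_bounds_imp_in_R_delta_p:
  assumes n: "1 \<le> n" and dom: "k_dominant n a"
    and prefix: "\<And>k. k \<in> {1..n} \<Longrightarrow> (\<Sum>i=1..k. a i) \<le> prefix_bound n k"
    and last: "(\<Sum>i=1..n-1. a i) - a n \<le> prefix_bound n n"
  shows "in_R_delta_p n a"
proof -
  have abs_prefix: "(\<Sum>i=1..k. \<bar>a i\<bar>) \<le> prefix_bound n k" if "k \<le> n" for k
  proof (cases "k = n")
    case True
    have "(\<Sum>i=1..n-1. \<bar>a i\<bar>) = (\<Sum>i=1..n-1. a i)"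
      using k_dominant_nonneg[OF dom] by (intro sum.cong) auto
    then have "(\<Sum>i=1..n. \<bar>a i\<bar>) = (\<Sum>i=1..n-1. a i) + \<bar>a n\<bar>"
      using sum_split_last[OF n, of "\<lambda>i. \<bar>a i\<bar>"] by simp
    moreover have "(\<Sum>i=1..n-1. a i) + a n \<le> prefix_bound n n"
      using prefix[of n] n sum_split_last[OF n, of a] by simp
    ultimately show ?thesis
      using True last by (simp add: abs_if)
  next
    case False
    then have "(\<Sum>i=1..k. \<bar>a i\<bar>) = (\<Sum>i=1..k. a i)"
      using that k_dominant_nonneg[OF dom] by (intro sum.cong) auto
    then show ?thesis
      using prefix[of k] that by (cases "k = 0") (simp_all add: prefix_bound_def)
  qed
  have subset_bound: "(\<Sum>i\<in>S. \<bar>a i\<bar>) \<le> prefix_bound (card {1..n}) (card S)"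
    if S: "S \<subseteq> {1..n}" for S
  proof -
    have "(\<Sum>i\<in>S. \<bar>a i\<bar>) \<le> (\<Sum>i=1..card S. \<bar>a i\<bar>)"
      using S k_dominant_abs_antimono[OF dom] by (intro sum_le_sum_prefix) auto
    also have "\<dots> \<le> prefix_bound n (card S)"
      using card_mono[OF _ S] by (intro abs_prefix) simp
    finally show ?thesis by simp
  qed
  have "coord_dot {1..n} c a \<le> zonotope_support {1..n} (delta_p n) c" for c
  proof -
    have "coord_dot {1..n} c a \<le> (\<Sum>i=1..n. \<bar>c i\<bar> * \<bar>a i\<bar>)"
      unfolding coord_dot_def by (intro sum_mono) (simp add: abs_mult[symmetric])
    also have "\<dots> \<le> max_pair_sum {1..n} (\<lambda>i. \<bar>c i\<bar>)"
      by (intro weighted_sum_le_max_pair_sum subset_bound) auto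
    also have "\<dots> = zonotope_support {1..n} (delta_p n) c"
      by (rule zonotope_support_delta_p[symmetric])
    finally show ?thesis .
  qed
  then show ?thesis
    by (simp add: in_R_delta_p_iff_in_zonotope in_zonotope_iff_support_bound finite_delta_p)
qed

lemma prefix_bounds_if_first_le:
  assumes n: "2 \<le> n" and dom: "k_dominant n a" and first: "a 1 \<le> real n + 1"
  shows "\<And>k. k \<in> {1..n} \<Longrightarrow> (\<Sum>i=1..k. a i) \<le> prefix_bound n k"
    and "(\<Sum>i=1..n-1. a i) - a n \<le> prefix_bound n n"
proof -
  have abs_le: "\<bar>a i\<bar> \<le> real n + 1" if "i \<in> {1..n}" for i
    using k_dominant_abs_antimono[OF dom, of 1 i] k_dominant_nonneg[OF dom, of 1] that n first
    by auto
  have abs_sum_le: "(\<Sum>i=1..k. \<bar>a i\<bar>) \<le> prefix_bound n k" if "k \<le> n" for k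
  proof -
    have "(\<Sum>i=1..k. \<bar>a i\<bar>) \<le> real k * (real n + 1)"
      using sum_bounded_above[of "{1..k}" "\<lambda>i. \<bar>a i\<bar>" "real n + 1"] abs_le that by simp
    also have "\<dots> \<le> prefix_bound n k"
    proof -
      have "real k * real k \<le> real k * real n"
        using that by (intro mult_left_mono) auto
      then show ?thesis
        by (simp add: prefix_bound_def power2_eq_square algebra_simps)
    qed
    finally show ?thesis .
  qed
  show "(\<Sum>i=1..k. a i) \<le> prefix_bound n k" if "k \<in> {1..n}" for k
  proof -
    have "(\<Sum>i=1..k. a i) \<le> (\<Sum>i=1..k. \<bar>a i\<bar>)"
      by (intro sum_mono) simp
    also have "\<dots> \<le> prefix_bound n k"
      using that by (intro abs_sum_le) simp
    finally show ?thesis .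
  qed
  have "(\<Sum>i=1..n-1. a i) - a n \<le> (\<Sum>i=1..n-1. \<bar>a i\<bar>) + \<bar>a n\<bar>"
    using sum_mono[of "{1..n-1}" a "\<lambda>i. \<bar>a i\<bar>"] by force
  also have "\<dots> = (\<Sum>i=1..n. \<bar>a i\<bar>)"
    using n sum_split_last[of n "\<lambda>i. \<bar>a i\<bar>"] by simp
  also have "\<dots> \<le> prefix_bound n n"
    by (rule abs_sum_le) simp
  finally show "(\<Sum>i=1..n-1. a i) - a n \<le> prefix_bound n n" .
qed

theorem mainTheorem10:
  fixes n :: nat and a :: "nat \<Rightarrow> real"
  assumes "n \<ge> 2"
    and "k_dominant n a"
    and "int_or_half_int n a"
  shows "(in_R_delta_p n a \<longleftrightarrow>
            ((\<forall>k\<in>{1..n}. (\<Sum>i=1..k. a i) \<le> real (2*n*k) - real (k^2) + real k) \<and>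
             (\<Sum>i=1..n-1. a i) - a n \<le> real (n^2 + n)))
         \<and> (a 1 \<le> real n + 1 \<longrightarrow> u_small n a)"
proof -
  have bound_eq: "prefix_bound n k = real (2*n*k) - real (k^2) + real k" for k
    by (simp add: prefix_bound_def)
  have last_bound_eq: "prefix_bound n n = real (n^2 + n)"
    by (simp add: prefix_bound_def power2_eq_square)
  have iff: "in_R_delta_p n a \<longleftrightarrow>
      (\<forall>k\<in>{1..n}. (\<Sum>i=1..k. a i) \<le> prefix_bound n k) \<and> (\<Sum>i=1..n-1. a i) - a n \<le> prefix_bound n n"
    using in_R_delta_p_imp_prefix_bounds prefix_bounds_imp_in_R_delta_p assms(1,2)
    by (metis Suc_1 Suc_leD)
  moreover have "a 1 \<le> real n + 1 \<longrightarrow> u_small n a"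
    using iff prefix_bounds_if_first_le[OF assms(1,2)] by (auto simp: u_small_def)
  ultimately show ?thesis
    unfolding bound_eq[symmetric] last_bound_eq[symmetric] by blast
qed

end
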